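(* Let $b\ge2$ be an integer and let $w$ be a fixed block of $b$-ary digits of length $p\ge1$. Let $k\ge1$. For every digit $d\in\{0,\dots,b-1\}$, $$\sum_{X:\,k_w(X)=k,\ X \text{ starts with } d} b^{-|X|}=b^{p-1}.$$ Moreover, $$\sum_{m} b^{-l(m)}=(b-1)\,b^{p-1},$$ where $m$ ranges over the positive integers whose minimal base-$b$ representation contains exactly $k$ occurrences of $w$, and $l(m)$ is the number of digits of that representation.
   Context: Strings are finite sequences over $\{0,\dots,b-1\}$, including the empty string. $|X|$ is the length of $X$. $k_w(X)$ is the number of possibly overlapping occurrences of $w$ in $X$: indices $i$ with $x_i\dots x_{i+p-1}=w$. The minimal representation of a positive integer is its base-$b$ digit string with no leading zeros. *)

theory Defs
  imports "HOL-Analysis.Analysis"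
begin

definition strings :: "nat \<Rightarrow> nat list set" where
  "strings b = {X. set X \<subseteq> {0..<b}}"

definition occ :: "nat list \<Rightarrow> nat list \<Rightarrow> nat" where
  "occ w X = card {i. i + length w \<le> length X \<and> take (length w) (drop i X) = w}"

function digs :: "nat \<Rightarrow> nat \<Rightarrow> nat list" where
  "digs b m = (if m = 0 \<or> b < 2 then [] else digs b (m div b) @ [m mod b])"
  by auto
termination
  by (relation "Wellfounded.measure (\<lambda>(b, m). m)") auto

end

theory Submission
  imports Defs "HOL-Library.Sublist"
begin

(* Weigh a string X by b^-|X| and let H be the set of admissible leading digits: {d} for the
   first claim, {1..<b} for the second, since minimal representations are exactly the strings
   with a nonzero leading digit.
   Cutting a string with k >= 1 occurrences of w right after its last occurrence splits it
   uniquely as V Z, where V ends with w and has k occurrences, and w Z contains w only once.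
   The weight is multiplicative, so the total weight is W_k * R, with W_k the total weight of
   such V and R that of such Z.
   Appending a digit preserves total weight; comparing the strings with j occurrences with
   their one-digit extensions gives W_(j+1) = W_j + [j = 0] |H|/b, so W_k = |H|/b.
   Reversal identifies the strings w Z with those whose only occurrence of rev w is at their
   end, the case k = 1 with all leading digits admissible; hence b^-p R = 1.
   The cancellations need the strings avoiding w to have finite total weight: their number
   decays geometrically in blocks of length p. *)

lemma suffix_iff_drop:
  "suffix w X \<longleftrightarrow> length w \<le> length X \<and> drop (length X - length w) X = w"
proof
  assume "suffix w X"
  then show "length w \<le> length X \<and> drop (length X - length w) X = w"
    by (auto simp: suffix_def)
next
  assume "length w \<le> length X \<and> drop (length X - length w) X = w"
  then show "suffix w X" by (metis suffix_drop)
qed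

lemma suffix_append_long_iff:
  assumes "length w \<le> length B"
  shows "suffix w (A @ B) \<longleftrightarrow> suffix w B"
  using assms by (simp add: suffix_iff_drop)

lemma occ_Nil: "w \<noteq> [] \<Longrightarrow> occ w [] = 0"
  unfolding occ_def by simp

lemma occ_self: "w \<noteq> [] \<Longrightarrow> occ w w = 1"
proof -
  have "{i. i + length w \<le> length w \<and> take (length w) (drop i w) = w} = {0}" by auto
  then show ?thesis unfolding occ_def by simp
qed

lemma occ_snoc:
  assumes "w \<noteq> []"
  shows "occ w (X @ [c]) = occ w X + (if suffix w (X @ [c]) then 1 else 0)"
proof -
  let ?p = "length w"
  define I where "I Y = {i. i + ?p \<le> length Y \<and> take ?p (drop i Y) = w}" for Y
  have fin: "finite (I X)" unfolding I_def by (rule finite_subset[of _ "{..length X}"]) auto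
  have "I (X @ [c]) = I X \<union> (if suffix w (X @ [c]) then {length X + 1 - ?p} else {})"
  proof (intro set_eqI iffI)
    fix i assume "i \<in> I (X @ [c])"
    then have i: "i + ?p \<le> length X + 1" "take ?p (drop i (X @ [c])) = w" unfolding I_def by auto
    show "i \<in> I X \<union> (if suffix w (X @ [c]) then {length X + 1 - ?p} else {})"
    proof (cases "i + ?p \<le> length X")
      case True
      then have "take ?p (drop i (X @ [c])) = take ?p (drop i X)" by simp
      then show ?thesis using i True unfolding I_def by auto
    next
      case False
      then have ii: "i = length X + 1 - ?p" using i by auto
      have "drop i (X @ [c]) = w" using i ii by simp
      then have "suffix w (X @ [c])" unfolding suffix_iff_drop using ii i by auto
      then show ?thesis using ii by simp
    qed
  next
    fix i assume "i \<in> I X \<union> (if suffix w (X @ [c]) then {length X + 1 - ?p} else {})"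
    then show "i \<in> I (X @ [c])"
    proof
      assume "i \<in> I X" then show ?thesis unfolding I_def by auto
    next
      assume "i \<in> (if suffix w (X @ [c]) then {length X + 1 - ?p} else {})"
      then show ?thesis unfolding I_def suffix_iff_drop by (auto split: if_splits)
    qed
  qed
  moreover have "length X + 1 - ?p \<notin> I X" using assms unfolding I_def by auto
  ultimately show ?thesis using fin unfolding occ_def I_def[symmetric]
    by (auto simp: card_insert_if)
qed

lemma occ_append_mono: "w \<noteq> [] \<Longrightarrow> occ w X \<le> occ w (X @ Y)"
proof (induction Y rule: rev_induct)
  case (snoc c Y)
  then show ?case using occ_snoc[of w "X @ Y" c] by simp
qed simp

lemma occ_pos_if_suffix:
  assumes "w \<noteq> []" "suffix w X"
  shows "occ w X > 0"
proof -
  obtain Y c where "X = Y @ [c]"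
    using assms by (metis append_butlast_last_id suffix_Nil)
  then show ?thesis using occ_snoc[OF assms(1), of Y c] assms by simp
qed

lemma occ_append_after_suffix:
  assumes w: "w \<noteq> []" and V: "suffix w V"
  shows "occ w (V @ Z) + 1 = occ w V + occ w (w @ Z)"
proof (induction Z rule: rev_induct)
  case Nil
  then show ?case using occ_self[OF w] by simp
next
  case (snoc c Z)
  obtain V0 where "V = V0 @ w" using V by (rule suffixE)
  then have "suffix w (V @ Z @ [c]) = suffix w (w @ Z @ [c])"
    using suffix_append_long_iff[of w "w @ Z @ [c]" V0] by simp
  then show ?case using snoc occ_snoc[OF w, of "V @ Z" c] occ_snoc[OF w, of "w @ Z" c] by simp
qed

text \<open>\<open>occ w (w @ Z) = 1\<close> says that no occurrence of \<open>w\<close> in \<open>V @ Z\<close> ends inside \<open>Z\<close>,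
  i.e. the cut is right after the last occurrence.\<close>

lemma last_occ_split_exists:
  assumes w: "w \<noteq> []"
  shows "occ w X > 0 \<Longrightarrow> \<exists>V Z. X = V @ Z \<and> suffix w V \<and> occ w (w @ Z) = 1"
proof (induction X rule: rev_induct)
  case Nil
  then show ?case using occ_Nil[OF w] by simp
next
  case (snoc c X)
  show ?case
  proof (cases "suffix w (X @ [c])")
    case True
    then show ?thesis using occ_self[OF w] by (intro exI[of _ "X @ [c]"] exI[of _ "[]"]) simp
  next
    case False
    then have "occ w X > 0" using snoc.prems occ_snoc[OF w, of X c] by (simp del: suffix_snoc)
    then obtain V Z where VZ: "X = V @ Z" "suffix w V" "occ w (w @ Z) = 1"
      using snoc.IH by blast
    obtain V0 where "V = V0 @ w" using VZ(2) by (rule suffixE)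
    then have "suffix w (w @ Z @ [c]) = suffix w (X @ [c])"
      using VZ(1) suffix_append_long_iff[of w "w @ Z @ [c]" V0] by simp
    then have "occ w (w @ Z @ [c]) = 1" using False VZ(3) occ_snoc[OF w, of "w @ Z" c] by simp
    then show ?thesis using VZ by (intro exI[of _ V] exI[of _ "Z @ [c]"]) simp
  qed
qed

lemma last_occ_split_unique:
  assumes w: "w \<noteq> []" and eq: "V @ Z = V' @ Z'" and V: "suffix w V" "suffix w V'"
    and Z: "occ w (w @ Z) = 1" "occ w (w @ Z') = 1"
  shows "V = V' \<and> Z = Z'"
proof -
  have no_later_suffix: "occ w (w @ Y @ U) \<noteq> 1"
    if V1: "suffix w V1" "suffix w (V1 @ Y)" and Y: "Y \<noteq> []" for V1 Y U
  proof -
    obtain V0 where "V1 = V0 @ w" using V1(1) by (rule suffixE)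
    then have "suffix w (w @ Y)"
      using V1(2) suffix_append_long_iff[of w "w @ Y" V0] by simp
    moreover obtain Y0 c where "Y = Y0 @ [c]" using Y by (metis append_butlast_last_id)
    ultimately have "occ w (w @ Y) = occ w (w @ Y0) + 1" using occ_snoc[OF w, of "w @ Y0" c] by simp
    moreover have "occ w (w @ Y0) \<ge> 1" using occ_append_mono[OF w, of w Y0] occ_self[OF w] by simp
    moreover have "occ w (w @ Y) \<le> occ w (w @ Y @ U)" using occ_append_mono[OF w, of "w @ Y" U] by simp
    ultimately show ?thesis by simp
  qed
  have "length V = length V'"
  proof (rule ccontr)
    assume "length V \<noteq> length V'"
    then consider "length V < length V'" | "length V' < length V" by linarith
    then show False
    proof cases
      case 1
      then obtain Y where "V' = V @ Y" "Z = Y @ Z'" "Y \<noteq> []" using eq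
        by (auto simp: append_eq_append_conv2)
      then show False using no_later_suffix[of V Y Z'] V Z by simp
    next
      case 2
      then obtain Y where "V = V' @ Y" "Z' = Y @ Z" "Y \<noteq> []" using eq
        by (auto simp: append_eq_append_conv2)
      then show False using no_later_suffix[of V' Y Z] V Z by simp
    qed
  qed
  then show ?thesis using eq by simp
qed

lemma occ_rev: "occ (rev w) (rev X) = occ w X"
proof -
  let ?p = "length w"
  define I where "I = {i. i + ?p \<le> length X \<and> take ?p (drop i X) = w}"
  define J where "J = {i. i + ?p \<le> length X \<and> take ?p (drop i (rev X)) = rev w}"
  let ?mirror = "\<lambda>i. length X - ?p - i"
  have take_drop_rev: "take ?p (drop (?mirror i) (rev X)) = rev (take ?p (drop i X))"
    if "i + ?p \<le> length X" for i
  proof -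
    have "drop (?mirror i) (rev X) = rev (take (?p + i) X)"
      using that by (simp add: drop_rev)
    moreover have "length X - ?p = i" if "length X \<le> ?p + i" using that \<open>i + ?p \<le> length X\<close> by simp
    ultimately show ?thesis using that by (simp add: take_rev drop_take min_def)
  qed
  have "J = ?mirror ` I"
  proof (intro set_eqI iffI)
    fix j assume j: "j \<in> J"
    then have i: "?mirror j + ?p \<le> length X" and "j = ?mirror (?mirror j)" unfolding J_def by auto
    moreover have "take ?p (drop (?mirror j) X) = w"
      using take_drop_rev[OF i] j calculation(2) unfolding J_def by (metis (mono_tags) mem_Collect_eq rev_rev_ident)
    ultimately show "j \<in> ?mirror ` I" unfolding I_def by blast
  next
    fix j assume "j \<in> ?mirror ` I"
    then obtain i where "i \<in> I" "j = ?mirror i" by blast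
    then show "j \<in> J" using take_drop_rev[of i] unfolding I_def J_def by auto
  qed
  moreover have "inj_on ?mirror I" unfolding I_def by (rule inj_onI) auto
  ultimately have "card J = card I" by (simp add: card_image)
  then show ?thesis unfolding occ_def I_def J_def by simp
qed

lemma strings_append [simp]: "X @ Y \<in> strings b \<longleftrightarrow> X \<in> strings b \<and> Y \<in> strings b"
  unfolding strings_def by auto

lemma strings_rev [simp]: "rev X \<in> strings b \<longleftrightarrow> X \<in> strings b"
  unfolding strings_def by simp

lemma hd_less_if_strings: "X \<in> strings b \<Longrightarrow> X \<noteq> [] \<Longrightarrow> hd X < b"
  by (cases X) (auto simp: strings_def)

lemma finite_strings_length: "finite {X \<in> strings b. length X = n}"
  unfolding strings_def using finite_lists_length_eq[of "{0..<b}" n] by simp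

lemma card_strings_length: "card {X \<in> strings b. length X = n} = b ^ n"
  unfolding strings_def using card_lists_length_eq[of "{0..<b}" n] by simp

definition weight :: "nat \<Rightarrow> nat list \<Rightarrow> real" where
  "weight b X = 1 / real b ^ length X"

lemma weight_nonneg: "weight b X \<ge> 0"
  unfolding weight_def by simp

lemma weight_append: "weight b (X @ Y) = weight b X * weight b Y"
  unfolding weight_def by (simp add: power_add)

lemma weight_rev [simp]: "weight b (rev X) = weight b X"
  unfolding weight_def by simp

lemma has_sum_product_nonneg:
  fixes f g :: "_ \<Rightarrow> real"
  assumes f: "(f has_sum a) A" and g: "(g has_sum c) B"
    and f_nonneg: "\<And>x. x \<in> A \<Longrightarrow> f x \<ge> 0" and g_nonneg: "\<And>y. y \<in> B \<Longrightarrow> g y \<ge> 0"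
  shows "((\<lambda>(x, y). f x * g y) has_sum (a * c)) (A \<times> B)"
proof (rule has_sum_SigmaI)
  have row: "((\<lambda>y. case (x, y) of (x, y) \<Rightarrow> f x * g y) has_sum f x * c) B" for x
    using has_sum_cmult_right[OF g] by simp
  show "((\<lambda>x. f x * c) has_sum a * c) A"
    using has_sum_cmult_left[OF f] by simp
  then have "(\<lambda>x. f x * c) summable_on A"
    by (auto simp: summable_on_def)
  then show "(\<lambda>(x, y). f x * g y) summable_on A \<times> B"
    by (rule summable_on_SigmaI[OF row]) (simp add: f_nonneg g_nonneg)
  show "((\<lambda>y. case (x, y) of (x, y) \<Rightarrow> f x * g y) has_sum f x * c) B" for x
    by (rule row)
qed

definition digit_extensions :: "nat \<Rightarrow> nat list set \<Rightarrow> nat list set" where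
  "digit_extensions b A = (\<lambda>(X, c). X @ [c]) ` (A \<times> {0..<b})"

lemma has_sum_digit_extensions:
  assumes b: "b > 0" and A: "(weight b has_sum s) A"
  shows "(weight b has_sum s) (digit_extensions b A)"
proof -
  have inj: "inj_on (\<lambda>(X, c). X @ [c]) (A \<times> {0..<b})" by (auto simp: inj_on_def)
  have digit: "((\<lambda>c::nat. 1 / real b) has_sum 1) {0..<b}"
    using b by (intro has_sum_finiteI) auto
  have "((\<lambda>(X, c). weight b X * (1 / real b)) has_sum (s * 1)) (A \<times> {0..<b})"
    by (rule has_sum_product_nonneg[OF A digit]) (auto simp: weight_nonneg)
  then have "((weight b \<circ> (\<lambda>(X, c). X @ [c])) has_sum s) (A \<times> {0..<b})"
    by (simp add: o_def case_prod_unfold weight_append) (simp add: weight_def)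
  then show ?thesis unfolding digit_extensions_def using has_sum_reindex[OF inj] by blast
qed

lemma sum_lessThan_le_of_periodic_decay:
  fixes a :: "nat \<Rightarrow> real"
  assumes p: "p \<ge> 1" and a_nonneg: "\<And>n. 0 \<le> a n" and a_le_1: "\<And>n. a n \<le> 1"
    and q: "0 \<le> q" "q < 1" and decay: "\<And>n. a (n + p) \<le> q * a n"
  shows "(\<Sum>n<N. a n) \<le> p / (1 - q)"
proof (induction N rule: less_induct)
  case (less N)
  have head: "(\<Sum>n<M. a n) \<le> M" for M
    using sum_mono[of "{..<M}" a "\<lambda>_. 1"] a_le_1 by simp
  have p_le: "real p \<le> p / (1 - q)" using q p by (simp add: field_simps)
  show ?case
  proof (cases "N \<le> p")
    case True
    then show ?thesis using head[of N] p_le by linarith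
  next
    case False
    then obtain M where M: "N = M + p" by (metis add.commute le_add_diff_inverse nat_le_linear)
    have split: "(\<Sum>n<N. a n) = (\<Sum>n<p. a n) + (\<Sum>n<M. a (n + p))"
      unfolding M by (induction M) (simp_all add: add.commute add.left_commute)
    have "(\<Sum>n<M. a (n + p)) \<le> q * (\<Sum>n<M. a n)"
      using sum_mono[of "{..<M}" "\<lambda>n. a (n + p)" "\<lambda>n. q * a n"] decay by (simp add: sum_distrib_left)
    also have "\<dots> \<le> q * (p / (1 - q))"
      using less.IH[of M] M p q by (intro mult_left_mono) auto
    finally have tail: "(\<Sum>n<M. a (n + p)) \<le> q * (p / (1 - q))" .
    have "p + q * (p / (1 - q)) = p / (1 - q)" using q by (simp add: field_simps)
    then show ?thesis using split head[of p] tail by linarith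
  qed
qed

lemma card_avoiding_add_le:
  assumes w: "w \<in> strings b" "w \<noteq> []"
  shows "card {X \<in> strings b. length X = n + length w \<and> occ w X = 0}
    \<le> (b ^ length w - 1) * card {X \<in> strings b. length X = n \<and> occ w X = 0}"
proof -
  let ?p = "length w"
  let ?A = "{X \<in> strings b. length X = n + ?p \<and> occ w X = 0}"
  let ?B = "{X \<in> strings b. length X = n \<and> occ w X = 0} \<times> ({X \<in> strings b. length X = ?p} - {w})"
  let ?split = "\<lambda>Y. (take n Y, drop n Y)"
  have "inj_on ?split ?A"
    by (rule inj_onI) (metis append_take_drop_id prod.inject)
  moreover have "?split ` ?A \<subseteq> ?B"
  proof (rule image_subsetI)
    fix Y assume "Y \<in> ?A"
    then have Y: "Y \<in> strings b" "length Y = n + ?p" "occ w Y = 0" by auto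
    have "occ w (take n Y) = 0"
      using occ_append_mono[OF w(2), of "take n Y" "drop n Y"] Y by simp
    moreover have "drop n Y \<noteq> w"
      using occ_pos_if_suffix[OF w(2), of Y] Y suffix_drop[of n Y] by auto
    moreover have "take n Y \<in> strings b" "drop n Y \<in> strings b"
      using Y(1) append_take_drop_id[of n Y] strings_append by metis+
    ultimately show "?split Y \<in> ?B" using Y by simp
  qed
  moreover have "finite ?B"
    by (intro finite_cartesian_product finite_Diff) (auto intro: rev_finite_subset[OF finite_strings_length])
  ultimately have "card ?A \<le> card ?B" by (rule card_inj_on_le)
  also have "card ?B = card {X \<in> strings b. length X = n \<and> occ w X = 0} * (b ^ ?p - 1)"
    using w finite_strings_length card_strings_length
    by (simp add: card_cartesian_product card_Diff_singleton)
  finally show ?thesis by (simp add: mult.commute)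
qed

lemma summable_on_weight_if_bounded_counts:
  assumes b: "b > 0" and A: "A \<subseteq> strings b"
    and bound: "\<And>N. (\<Sum>n<N. card {X \<in> A. length X = n} / real b ^ n) \<le> C"
  shows "weight b summable_on A"
proof (rule nonneg_bdd_above_summable_on)
  define L where "L n = {X \<in> A. length X = n}" for n
  have fin_L: "finite (L n)" for n
    unfolding L_def by (rule finite_subset[OF _ finite_strings_length[of b n]]) (use A in auto)
  show "bdd_above (sum (weight b) ` {F. F \<subseteq> A \<and> finite F})"
  proof (rule bdd_aboveI2)
    fix F assume F: "F \<in> {F. F \<subseteq> A \<and> finite F}"
    define N where "N = Suc (Max (insert 0 (length ` F)))"
    have "F \<subseteq> (\<Union>n<N. L n)"
      using F by (auto simp: L_def N_def less_Suc_eq_le)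
    then have "sum (weight b) F \<le> sum (weight b) (\<Union>n<N. L n)"
      using fin_L by (intro sum_mono2) (auto simp: weight_nonneg)
    also have "\<dots> = (\<Sum>n<N. sum (weight b) (L n))"
      using fin_L by (intro sum.UNION_disjoint) (auto simp: L_def)
    also have "\<dots> = (\<Sum>n<N. card (L n) / real b ^ n)"
      by (intro sum.cong refl) (simp add: L_def weight_def)
    also have "\<dots> \<le> C" using bound unfolding L_def .
    finally show "sum (weight b) F \<le> C" .
  qed
qed (rule weight_nonneg)

lemma summable_on_avoiding:
  assumes b: "b \<ge> 2" and w: "w \<in> strings b" "w \<noteq> []"
  shows "weight b summable_on {X \<in> strings b. occ w X = 0}"
proof -
  let ?p = "length w"
  define a where "a n = card {X \<in> strings b. length X = n \<and> occ w X = 0} / real b ^ n" for n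
  define q where "q = (real b ^ ?p - 1) / real b ^ ?p"
  have b_pow: "real b ^ ?p \<ge> 1" using b by simp
  have q: "0 \<le> q" "q < 1" unfolding q_def using b_pow by (auto simp: divide_simps)
  have "a n \<le> 1" for n
  proof -
    have "card {X \<in> strings b. length X = n \<and> occ w X = 0} \<le> card {X \<in> strings b. length X = n}"
      by (intro card_mono finite_strings_length) auto
    then show ?thesis
      using b unfolding a_def card_strings_length by (simp add: field_simps flip: of_nat_power)
  qed
  moreover have "a (n + ?p) \<le> q * a n" for n
  proof -
    have "real (card {X \<in> strings b. length X = n + ?p \<and> occ w X = 0})
      \<le> real (b ^ ?p - 1) * card {X \<in> strings b. length X = n \<and> occ w X = 0}"
      unfolding of_nat_mult[symmetric] of_nat_le_iff by (rule card_avoiding_add_le[OF w])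
    also have "real (b ^ ?p - 1) = real b ^ ?p - 1"
      using b by (simp add: of_nat_diff)
    finally have "real (card {X \<in> strings b. length X = n + ?p \<and> occ w X = 0})
      \<le> (real b ^ ?p - 1) * card {X \<in> strings b. length X = n \<and> occ w X = 0}" .
    then show ?thesis
      using b unfolding a_def q_def by (simp add: power_add field_simps)
  qed
  moreover have "?p \<ge> 1" using w by (cases w) auto
  ultimately have "(\<Sum>n<N. a n) \<le> ?p / (1 - q)" for N
    using sum_lessThan_le_of_periodic_decay[of ?p a q N] q unfolding a_def by simp
  moreover have "{X \<in> {X \<in> strings b. occ w X = 0}. length X = n}
      = {X \<in> strings b. length X = n \<and> occ w X = 0}" for n
    by auto
  ultimately show ?thesis
    using b by (intro summable_on_weight_if_bounded_counts[where C = "?p / (1 - q)"]) (auto simp: a_def)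
qed

definition occ_strings :: "nat \<Rightarrow> nat list \<Rightarrow> nat set \<Rightarrow> nat \<Rightarrow> nat list set" where
  "occ_strings b w H k = {X \<in> strings b. X \<noteq> [] \<and> hd X \<in> H \<and> occ w X = k}"

definition suffix_occ_strings :: "nat \<Rightarrow> nat list \<Rightarrow> nat set \<Rightarrow> nat \<Rightarrow> nat list set" where
  "suffix_occ_strings b w H k = {X \<in> occ_strings b w H k. suffix w X}"

definition tail_strings :: "nat \<Rightarrow> nat list \<Rightarrow> nat list set" where
  "tail_strings b w = {Z \<in> strings b. occ w (w @ Z) = 1}"

lemma suffix_occ_strings_0: "w \<noteq> [] \<Longrightarrow> suffix_occ_strings b w H 0 = {}"
  unfolding suffix_occ_strings_def occ_strings_def using occ_pos_if_suffix by fastforce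

lemma occ_strings_Un_suffix_occ_strings_Suc:
  assumes w: "w \<noteq> []" and H: "H \<subseteq> {0..<b}"
  shows "occ_strings b w H j \<union> suffix_occ_strings b w H (Suc j) =
    digit_extensions b (occ_strings b w H j) \<union> suffix_occ_strings b w H j
      \<union> (if j = 0 then (\<lambda>c. [c]) ` H else {})"
proof (intro set_eqI iffI)
  fix X assume "X \<in> occ_strings b w H j \<union> suffix_occ_strings b w H (Suc j)"
  then have X: "X \<in> strings b" "X \<noteq> []" "hd X \<in> H"
      "occ w X = j \<or> (occ w X = Suc j \<and> suffix w X)"
    unfolding occ_strings_def suffix_occ_strings_def by auto
  obtain Y c where Yc: "X = Y @ [c]" using X(2) by (metis append_butlast_last_id)
  have c: "c < b" using X(1) Yc unfolding strings_def by auto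
  have occ_X: "occ w X = occ w Y + (if suffix w X then 1 else 0)"
    using occ_snoc[OF w, of Y c] Yc by simp
  show "X \<in> digit_extensions b (occ_strings b w H j) \<union> suffix_occ_strings b w H j
      \<union> (if j = 0 then (\<lambda>c. [c]) ` H else {})"
  proof (cases "occ w X = j \<and> suffix w X")
    case True
    then show ?thesis using X unfolding occ_strings_def suffix_occ_strings_def by auto
  next
    case False
    then have occ_Y: "occ w Y = j" using X(4) occ_X by (auto split: if_splits)
    show ?thesis
    proof (cases "Y = []")
      case True
      then have "j = 0" using occ_Y occ_Nil[OF w] by simp
      then show ?thesis using X(3) Yc True by auto
    next
      case False
      then have "Y \<in> occ_strings b w H j" using occ_Y X Yc unfolding occ_strings_def by auto
      then show ?thesis unfolding digit_extensions_def using Yc c by auto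
    qed
  qed
next
  fix X assume "X \<in> digit_extensions b (occ_strings b w H j) \<union> suffix_occ_strings b w H j
      \<union> (if j = 0 then (\<lambda>c. [c]) ` H else {})"
  then consider (ext) Y c where "X = Y @ [c]" "Y \<in> occ_strings b w H j" "c < b"
    | (suffix) "X \<in> suffix_occ_strings b w H j"
    | (single) c where "j = 0" "X = [c]" "c \<in> H"
    unfolding digit_extensions_def by (auto split: if_splits)
  then show "X \<in> occ_strings b w H j \<union> suffix_occ_strings b w H (Suc j)"
  proof cases
    case ext
    then have "occ w X = j + (if suffix w X then 1 else 0)"
      using occ_snoc[OF w, of Y c] unfolding occ_strings_def by (simp del: suffix_snoc)
    moreover have "X \<in> strings b" "X \<noteq> []" "hd X \<in> H"
      using ext unfolding occ_strings_def strings_def by auto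
    ultimately show ?thesis
      unfolding occ_strings_def suffix_occ_strings_def by (auto split: if_splits)
  next
    case suffix
    then show ?thesis unfolding suffix_occ_strings_def by auto
  next
    case single
    then have "X \<in> strings b" using H unfolding strings_def by auto
    then show ?thesis using single occ_snoc[OF w, of "[]" c] occ_Nil[OF w]
      unfolding occ_strings_def suffix_occ_strings_def by (auto split: if_splits)
  qed
qed

text \<open>The total weight of the strings with \<open>j\<close> occurrences cancels from both sides of the
  previous identity; this is why it must be finite.\<close>

lemma has_sum_suffix_occ_strings_Suc:
  assumes b: "b > 0" and w: "w \<noteq> []" and H: "H \<subseteq> {0..<b}"
    and summable: "weight b summable_on occ_strings b w H j"
    and v: "(weight b has_sum v) (suffix_occ_strings b w H j)"
  shows "(weight b has_sum (v + (if j = 0 then card H / b else 0))) (suffix_occ_strings b w H (Suc j))"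
proof -
  define \<sigma> where "\<sigma> = infsum (weight b) (occ_strings b w H j)"
  define T where "T = (if j = 0 then (\<lambda>c. [c]) ` H else {})"
  have S: "(weight b has_sum \<sigma>) (occ_strings b w H j)"
    using summable unfolding \<sigma>_def by (rule has_sum_infsum)
  have T: "(weight b has_sum (if j = 0 then card H / b else 0)) T"
  proof (cases "j = 0")
    case True
    have "sum (weight b) ((\<lambda>c. [c]) ` H) = (\<Sum>c\<in>H. weight b [c])"
      by (subst sum.reindex) (auto simp: inj_on_def)
    also have "\<dots> = card H / b" by (simp add: weight_def)
    finally show ?thesis
      using True finite_subset[OF H] unfolding T_def by (intro has_sum_finiteI) auto
  qed (simp add: T_def)
  have "Y @ [c] \<notin> suffix_occ_strings b w H j" if "Y \<in> occ_strings b w H j" for Y c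
  proof
    assume "Y @ [c] \<in> suffix_occ_strings b w H j"
    then have "occ w (Y @ [c]) = j" "suffix w (Y @ [c])"
      unfolding suffix_occ_strings_def occ_strings_def by auto
    moreover have "occ w Y = j" using that unfolding occ_strings_def by simp
    ultimately show False using occ_snoc[OF w, of Y c] by (simp del: suffix_snoc)
  qed
  then have "digit_extensions b (occ_strings b w H j) \<inter> suffix_occ_strings b w H j = {}"
    unfolding digit_extensions_def by auto
  moreover have "(digit_extensions b (occ_strings b w H j) \<union> suffix_occ_strings b w H j) \<inter> T = {}"
    unfolding T_def digit_extensions_def occ_strings_def using suffix_occ_strings_0[OF w]
    by (auto split: if_splits)
  ultimately have R: "(weight b has_sum (\<sigma> + v + (if j = 0 then card H / b else 0)))
      (occ_strings b w H j \<union> suffix_occ_strings b w H (Suc j))"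
    unfolding occ_strings_Un_suffix_occ_strings_Suc[OF w H] T_def[symmetric]
    by (intro has_sum_Un_disjoint has_sum_digit_extensions[OF b S] v T)
  then have "weight b summable_on suffix_occ_strings b w H (Suc j)"
    by (meson Un_upper2 summable_on_def summable_on_subset_banach)
  then obtain u where u: "(weight b has_sum u) (suffix_occ_strings b w H (Suc j))"
    unfolding summable_on_def by blast
  have "occ_strings b w H j \<inter> suffix_occ_strings b w H (Suc j) = {}"
    unfolding suffix_occ_strings_def occ_strings_def by auto
  then have "(weight b has_sum (\<sigma> + u)) (occ_strings b w H j \<union> suffix_occ_strings b w H (Suc j))"
    by (intro has_sum_Un_disjoint S u)
  then have "u = v + (if j = 0 then card H / b else 0)"
    using R has_sum_unique by fastforce
  then show ?thesis using u by simp
qed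

lemma summable_on_occ_strings_0:
  assumes "b \<ge> 2" "w \<in> strings b" "w \<noteq> []"
  shows "weight b summable_on occ_strings b w H 0"
  using summable_on_avoiding[OF assms]
  by (rule summable_on_subset_banach) (auto simp: occ_strings_def)

lemma has_sum_suffix_occ_strings_1:
  assumes b: "b \<ge> 2" and w: "w \<in> strings b" "w \<noteq> []" and H: "H \<subseteq> {0..<b}"
  shows "(weight b has_sum (card H / b)) (suffix_occ_strings b w H 1)"
  using has_sum_suffix_occ_strings_Suc[of b w H 0 0] summable_on_occ_strings_0[OF b w]
    b w H suffix_occ_strings_0[OF w(2)] by simp

lemma has_sum_tail_strings:
  assumes b: "b \<ge> 2" and w: "w \<in> strings b" "w \<noteq> []"
  shows "(weight b has_sum (real b ^ length w)) (tail_strings b w)"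
proof -
  let ?D = "{0..<b}"
  have "rev w \<in> strings b" "rev w \<noteq> []" using w by auto
  then have "(weight b has_sum 1) (suffix_occ_strings b (rev w) ?D 1)"
    using has_sum_suffix_occ_strings_1[OF b, of "rev w" ?D] b by simp
  then have "(weight b has_sum 1) (rev ` suffix_occ_strings b (rev w) ?D 1)"
    using has_sum_reindex[of rev "suffix_occ_strings b (rev w) ?D 1" "weight b" 1] by (simp add: o_def)
  moreover have "rev ` suffix_occ_strings b (rev w) ?D 1 = (\<lambda>Z. w @ Z) ` tail_strings b w"
  proof (intro set_eqI iffI)
    fix X assume "X \<in> rev ` suffix_occ_strings b (rev w) ?D 1"
    then obtain Y where Y: "Y \<in> suffix_occ_strings b (rev w) ?D 1" "X = rev Y" by blast
    then have X: "X \<in> strings b" "occ w X = 1" "prefix w X"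
      unfolding suffix_occ_strings_def occ_strings_def
      using occ_rev[of w X] suffix_to_prefix[of "rev w" Y] by auto
    then obtain Z where "X = w @ Z" by (auto elim: prefixE)
    then show "X \<in> (\<lambda>Z. w @ Z) ` tail_strings b w"
      using X unfolding tail_strings_def by auto
  next
    fix X assume "X \<in> (\<lambda>Z. w @ Z) ` tail_strings b w"
    then obtain Z where Z: "Z \<in> tail_strings b w" "X = w @ Z" by blast
    then have "rev X \<in> strings b" "rev X \<noteq> []" "occ (rev w) (rev X) = 1" "suffix (rev w) (rev X)"
      using w occ_rev[of w X] unfolding tail_strings_def suffix_to_prefix by auto
    moreover have "hd (rev X) \<in> ?D" using hd_less_if_strings calculation(1,2) by auto
    ultimately have "rev X \<in> suffix_occ_strings b (rev w) ?D 1"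
      unfolding suffix_occ_strings_def occ_strings_def by auto
    then show "X \<in> rev ` suffix_occ_strings b (rev w) ?D 1" by (metis image_eqI rev_rev_ident)
  qed
  ultimately have "((\<lambda>Z. weight b w * weight b Z) has_sum 1) (tail_strings b w)"
    using has_sum_reindex[of "\<lambda>Z. w @ Z" "tail_strings b w" "weight b" 1]
    by (simp add: o_def weight_append inj_on_def)
  then have "((\<lambda>Z. real b ^ length w * (weight b w * weight b Z)) has_sum (real b ^ length w * 1))
      (tail_strings b w)"
    by (rule has_sum_cmult_right)
  moreover have "real b ^ length w * (weight b w * weight b Z) = weight b Z" for Z
    using b by (simp add: weight_def)
  ultimately show ?thesis by simp
qed

lemma occ_strings_eq_image_append:
  assumes w: "w \<noteq> []" and k: "k \<ge> 1"
  shows "occ_strings b w H k = (\<lambda>(V, Z). V @ Z) ` (suffix_occ_strings b w H k \<times> tail_strings b w)"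
proof (intro set_eqI iffI)
  fix X assume X: "X \<in> occ_strings b w H k"
  then have "occ w X > 0" using k unfolding occ_strings_def by simp
  then obtain V Z where VZ: "X = V @ Z" "suffix w V" "occ w (w @ Z) = 1"
    using last_occ_split_exists[OF w] by blast
  have "occ w V = k"
    using occ_append_after_suffix[OF w VZ(2), of Z] VZ X unfolding occ_strings_def by simp
  moreover have "V \<noteq> []" using VZ(2) w by auto
  ultimately have "V \<in> suffix_occ_strings b w H k"
    using X VZ unfolding suffix_occ_strings_def occ_strings_def by auto
  moreover have "Z \<in> tail_strings b w" using X VZ unfolding tail_strings_def occ_strings_def by auto
  ultimately show "X \<in> (\<lambda>(V, Z). V @ Z) ` (suffix_occ_strings b w H k \<times> tail_strings b w)"
    using VZ(1) by auto
next
  fix X assume "X \<in> (\<lambda>(V, Z). V @ Z) ` (suffix_occ_strings b w H k \<times> tail_strings b w)"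
  then obtain V Z where VZ: "X = V @ Z" "V \<in> suffix_occ_strings b w H k" "Z \<in> tail_strings b w"
    by auto
  then have "occ w X = k"
    using occ_append_after_suffix[OF w, of V Z]
    unfolding suffix_occ_strings_def occ_strings_def tail_strings_def by simp
  then show "X \<in> occ_strings b w H k"
    using VZ unfolding suffix_occ_strings_def occ_strings_def tail_strings_def by auto
qed

lemma inj_on_append_suffix_occ_strings_tail_strings:
  assumes "w \<noteq> []"
  shows "inj_on (\<lambda>(V, Z). V @ Z) (suffix_occ_strings b w H k \<times> tail_strings b w)"
proof (rule inj_onI)
  fix x y
  assume "x \<in> suffix_occ_strings b w H k \<times> tail_strings b w"
    and "y \<in> suffix_occ_strings b w H k \<times> tail_strings b w"
    and "(\<lambda>(V, Z). V @ Z) x = (\<lambda>(V, Z). V @ Z) y"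
  moreover obtain V Z V' Z' where "x = (V, Z)" "y = (V', Z')" by fastforce
  ultimately show "x = y"
    using last_occ_split_unique[OF assms, of V Z V' Z']
    unfolding suffix_occ_strings_def tail_strings_def by simp
qed

lemma has_sum_occ_strings_if_suffix_occ_strings:
  assumes b: "b \<ge> 2" and w: "w \<in> strings b" "w \<noteq> []" and k: "k \<ge> 1"
    and v: "(weight b has_sum v) (suffix_occ_strings b w H k)"
  shows "(weight b has_sum (v * real b ^ length w)) (occ_strings b w H k)"
proof -
  have "((\<lambda>(V, Z). weight b V * weight b Z) has_sum (v * real b ^ length w))
      (suffix_occ_strings b w H k \<times> tail_strings b w)"
    by (rule has_sum_product_nonneg[OF v has_sum_tail_strings[OF b w]]) (auto simp: weight_nonneg)
  then have "((weight b \<circ> (\<lambda>(V, Z). V @ Z)) has_sum (v * real b ^ length w))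
      (suffix_occ_strings b w H k \<times> tail_strings b w)"
    by (simp add: o_def case_prod_unfold weight_append)
  then show ?thesis
    unfolding occ_strings_eq_image_append[OF w(2) k]
    using has_sum_reindex[OF inj_on_append_suffix_occ_strings_tail_strings[OF w(2)]] by blast
qed

lemma has_sum_suffix_occ_strings:
  assumes b: "b \<ge> 2" and w: "w \<in> strings b" "w \<noteq> []" and H: "H \<subseteq> {0..<b}" and k: "k \<ge> 1"
  shows "(weight b has_sum (card H / b)) (suffix_occ_strings b w H k)"
  using k
proof (induction k rule: dec_induct)
  case base
  then show ?case using has_sum_suffix_occ_strings_1[OF b w H] by simp
next
  case (step k)
  have "weight b summable_on occ_strings b w H k"
    using has_sum_occ_strings_if_suffix_occ_strings[OF b w step.hyps(1) step.IH]
    by (auto simp: summable_on_def)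
  then show ?case
    using has_sum_suffix_occ_strings_Suc[OF _ w(2) H _ step.IH] b step.hyps(1) by simp
qed

lemma has_sum_occ_strings:
  assumes b: "b \<ge> 2" and w: "w \<in> strings b" "w \<noteq> []" and H: "H \<subseteq> {0..<b}" and k: "k \<ge> 1"
  shows "(weight b has_sum (card H * real b ^ (length w - 1))) (occ_strings b w H k)"
proof -
  have "card H / b * real b ^ length w = card H * real b ^ (length w - 1)"
    using b w(2) by (cases "length w") (auto simp: field_simps)
  then show ?thesis
    using has_sum_occ_strings_if_suffix_occ_strings[OF b w k has_sum_suffix_occ_strings[OF assms]]
    by simp
qed

declare digs.simps [simp del]

lemma digs_0 [simp]: "digs b 0 = []"
  by (simp add: digs.simps)

lemma digs_pos: "b \<ge> 2 \<Longrightarrow> m > 0 \<Longrightarrow> digs b m = digs b (m div b) @ [m mod b]"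
  by (simp add: digs.simps)

definition from_digits :: "nat \<Rightarrow> nat list \<Rightarrow> nat" where
  "from_digits b X = foldl (\<lambda>a d. a * b + d) 0 X"

lemma from_digits_snoc: "from_digits b (X @ [c]) = from_digits b X * b + c"
  unfolding from_digits_def by simp

lemma digs_in_strings: "b \<ge> 2 \<Longrightarrow> digs b m \<in> strings b"
proof (induction b m rule: digs.induct)
  case (1 b m)
  then show ?case by (cases "m = 0") (auto simp: digs_pos strings_def)
qed

lemma from_digits_digs: "b \<ge> 2 \<Longrightarrow> from_digits b (digs b m) = m"
proof (induction b m rule: digs.induct)
  case (1 b m)
  then show ?case by (cases "m = 0") (auto simp: digs_pos from_digits_snoc from_digits_def)
qed

lemma hd_digs_nonzero: "b \<ge> 2 \<Longrightarrow> m > 0 \<Longrightarrow> digs b m \<noteq> [] \<and> hd (digs b m) \<noteq> 0"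
proof (induction b m rule: digs.induct)
  case (1 b m)
  show ?case
  proof (cases "m div b = 0")
    case True
    then have "m < b" using "1.prems" by (simp add: div_eq_0_iff)
    then show ?thesis using "1.prems" True by (simp add: digs_pos)
  next
    case False
    then have "digs b (m div b) \<noteq> []" "hd (digs b (m div b)) \<noteq> 0"
      using "1" by auto
    then show ?thesis using digs_pos[OF "1.prems"] by simp
  qed
qed

lemma digs_from_digits:
  assumes b: "b \<ge> 2"
  shows "X \<in> strings b \<Longrightarrow> X \<noteq> [] \<Longrightarrow> hd X \<noteq> 0 \<Longrightarrow> digs b (from_digits b X) = X \<and> from_digits b X > 0"
proof (induction X rule: rev_induct)
  case (snoc c X)
  have c: "c < b" using snoc.prems unfolding strings_def by auto
  show ?case
  proof (cases "X = []")
    case True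
    then have "c > 0" using snoc.prems by simp
    then show ?thesis using True c b by (simp add: digs_pos from_digits_def)
  next
    case False
    then have IH: "digs b (from_digits b X) = X" "from_digits b X > 0"
      using snoc by auto
    have "(from_digits b X * b + c) div b = from_digits b X" "(from_digits b X * b + c) mod b = c"
      using c b by auto
    then show ?thesis
      using IH b digs_pos[OF b, of "from_digits b X * b + c"] by (simp add: from_digits_snoc)
  qed
qed simp

lemma bij_betw_digs:
  assumes "b \<ge> 2"
  shows "bij_betw (digs b) {m. 0 < m \<and> P (digs b m)} {X \<in> strings b. X \<noteq> [] \<and> hd X \<noteq> 0 \<and> P X}"
  using assms digs_in_strings hd_digs_nonzero from_digits_digs digs_from_digits
  by (intro bij_betw_byWitness[where f' = "from_digits b"]) auto

theorem proposition1:
  fixes b p k :: nat and w :: "nat list"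
  assumes "b \<ge> 2" and "w \<in> strings b" and "length w = p" and "p \<ge> 1" and "k \<ge> 1"
  shows "(\<forall>d<b. ((\<lambda>X. 1 / real b ^ length X) has_sum (real b ^ (p - 1)))
              {X \<in> strings b. occ w X = k \<and> X \<noteq> [] \<and> hd X = d})
       \<and> ((\<lambda>m. 1 / real b ^ length (digs b m)) has_sum ((real b - 1) * real b ^ (p - 1)))
              {m::nat. m > 0 \<and> occ w (digs b m) = k}"
proof -
  have b: "b \<ge> 2" and w: "w \<in> strings b" "w \<noteq> []" using assms by auto
  have "(weight b has_sum real b ^ (p - 1)) {X \<in> strings b. occ w X = k \<and> X \<noteq> [] \<and> hd X = d}"
    if "d < b" for d
  proof -
    have "{X \<in> strings b. occ w X = k \<and> X \<noteq> [] \<and> hd X = d} = occ_strings b w {d} k"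
      by (auto simp: occ_strings_def)
    then show ?thesis using has_sum_occ_strings[OF b w _ assms(5), of "{d}"] that assms(3) by simp
  qed
  moreover have "occ_strings b w {1..<b} k = {X \<in> strings b. X \<noteq> [] \<and> hd X \<noteq> 0 \<and> occ w X = k}"
    using hd_less_if_strings by (auto simp: occ_strings_def)
  then have "(weight b has_sum ((real b - 1) * real b ^ (p - 1)))
      {X \<in> strings b. X \<noteq> [] \<and> hd X \<noteq> 0 \<and> occ w X = k}"
    using has_sum_occ_strings[OF b w _ assms(5), of "{1..<b}"] assms(3) b by (simp add: of_nat_diff)
  then have "((\<lambda>m. weight b (digs b m)) has_sum ((real b - 1) * real b ^ (p - 1)))
      {m. 0 < m \<and> occ w (digs b m) = k}"
    using has_sum_reindex_bij_betw[OF bij_betw_digs[OF b, of "\<lambda>X. occ w X = k"]] by blast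
  ultimately show ?thesis unfolding weight_def by simp
qed

end
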